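(* $\Delta_u$ is a simple closed curve, and the area of the region it bounds equals $\dfrac{\pi c^4}{2ab}=\dfrac{\pi(a^2-b^2)^2}{2ab}$; in particular it is independent of $u$.
   Context: Let $a>b>0$ and $c>0$ with $c^2=a^2-b^2$. Let $\mathcal{E}$ be the ellipse $x^2/a^2+y^2/b^2=1$ with center $O=(0,0)$, parametrized by $P(t)=(a\cos t,b\sin t)$. Fix $u\in\mathbb{R}$ and let $M=M_u=(a\cos u,b\sin u)\in\mathcal{E}$. Let $\Delta_u(t)=(x_u(t),y_u(t))$, $t\in\mathbb{R}$, where $x_u(t)=\frac1a\big(c^2(1+\cos(t+u))\cos t-a^2\cos u\big)$ and $y_u(t)=\frac1b\big(c^2\cos t\sin(t+u)-c^2\sin t-a^2\sin u\big)$; this is the negative pedal curve of $\mathcal{E}$ with respect to $M$, i.e. the envelope of the lines through $P(t)$ perpendicular to $P(t)-M$. *)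

theory Defs
  imports "HOL-Analysis.Analysis"
begin

text \<open>The negative pedal curve Delta_u of the ellipse x^2/a^2+y^2/b^2=1 with respect to
  M_u = (a cos u, b sin u), with c^2 = a^2 - b^2, as a map R -> C (plane identified with C).\<close>
definition neg_pedal :: "real \<Rightarrow> real \<Rightarrow> real \<Rightarrow> real \<Rightarrow> real \<Rightarrow> complex" where
  "neg_pedal a b c u t =
     Complex ((c^2 * (1 + cos (t + u)) * cos t - a^2 * cos u) / a)
             ((c^2 * cos t * sin (t + u) - c^2 * sin t - a^2 * sin u) / b)"

definition neg_pedal_path :: "real \<Rightarrow> real \<Rightarrow> real \<Rightarrow> real \<Rightarrow> real \<Rightarrow> complex" where
  "neg_pedal_path a b c u s = neg_pedal a b c u (2 * pi * s)"

end

theory Submission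
  imports Defs "HOL-Complex_Analysis.Contour_Integration"
begin

(* With S (x + iy) = x/a + iy/b one has Delta_u(t) = G (e^(-it)) for
   G z = S (c^2 (z + e^(iu) conj(z)^2 / 2) + (c^2/2 - a^2) e^(iu)).
   G is injective on the closed unit disc: z + e conj(z)^2/2 = w + e conj(w)^2/2 with |e| <= 1 gives
   |z - w| <= |z - w| |z + w| / 2, i.e. |z + w| >= 2, which by the parallelogram law forces z = w.
   Hence Delta_u is a Jordan curve, and by invariance of domain its inside is G of the open disc.
   The Jacobian of G is c^4 (1 - |z|^2) / (ab), whose integral over the disc is pi c^4 / (2ab). *)

lemma inj_on_add_cnj_square_cball:
  fixes e :: complex
  assumes "norm e \<le> 1"
  shows "inj_on (\<lambda>z. z + e * cnj z ^ 2 / 2) (cball 0 1)"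
proof (rule inj_onI, rule ccontr)
  fix z w :: complex
  assume z: "z \<in> cball 0 1" and w: "w \<in> cball 0 1" and "z \<noteq> w"
    and eq: "z + e * cnj z ^ 2 / 2 = w + e * cnj w ^ 2 / 2"
  have "z - w = e * (cnj w ^ 2 - cnj z ^ 2) / 2"
    using eq by (simp add: field_simps) algebra
  also have "\<dots> = - e * cnj (z - w) * cnj (z + w) / 2"
    by (simp add: power2_eq_square algebra_simps)
  finally have "norm (z - w) = norm (- e * cnj (z - w) * cnj (z + w) / 2)"
    by (rule arg_cong)
  also have "\<dots> = norm e * (norm (z - w) * norm (z + w) / 2)"
    by (simp only: norm_divide norm_mult norm_minus_cancel complex_mod_cnj) simp
  also have "\<dots> \<le> norm (z - w) * norm (z + w) / 2"
    using assms by (simp add: mult_left_le_one_le)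
  finally have "norm (z - w) \<le> norm (z - w) * norm (z + w) / 2" .
  then have "2 \<le> norm (z + w)"
    using \<open>z \<noteq> w\<close> by (simp add: field_simps)
  then have "4 \<le> norm (z + w) ^ 2"
    using power_mono[of 2 "norm (z + w)" 2] by simp
  moreover have "norm (z + w) ^ 2 + norm (z - w) ^ 2 = 2 * norm z ^ 2 + 2 * norm w ^ 2"
    by (simp add: power2_norm_eq_inner algebra_simps inner_commute)
  moreover have "norm z ^ 2 \<le> 1" "norm w ^ 2 \<le> 1"
    using z w by (simp_all add: power_le_one)
  ultimately have "norm (z - w) ^ 2 \<le> 0"
    by linarith
  then show False using \<open>z \<noteq> w\<close> by simp
qed

lemma inside_image_sphere:
  fixes f :: "complex \<Rightarrow> complex"
  assumes cont: "continuous_on (cball a r) f" and inj: "inj_on f (cball a r)" and "r > 0"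
  shows "inside (f ` sphere a r) = f ` ball a r"
proof -
  let ?P = "f ` sphere a r" and ?U = "f ` ball a r"
  have "simple_path (f \<circ> circlepath a r)"
    using \<open>r > 0\<close> cont inj
    by (intro simple_path_continuous_image)
       (auto simp: simple_path_circlepath intro: continuous_on_subset inj_on_subset)
  moreover have "pathfinish (f \<circ> circlepath a r) = pathstart (f \<circ> circlepath a r)"
    by (simp add: pathstart_compose pathfinish_compose)
  moreover have "path_image (f \<circ> circlepath a r) = ?P"
    using \<open>r > 0\<close> by (simp add: path_image_compose)
  ultimately have jordan: "connected (inside ?P)" "connected (outside ?P)" "\<not> bounded (outside ?P)"
      "inside ?P \<union> outside ?P = - ?P"
    using Jordan_inside_outside by metis+
  have "open ?U"
    using cont inj by (intro invariance_of_domain) (auto intro: continuous_on_subset inj_on_subset)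
  have "bounded ?U"
    using cont by (meson ball_subset_cball bounded_subset compact_continuous_image compact_imp_bounded
        compact_cball image_mono)
  have U_disjoint_P: "?U \<inter> ?P = {}"
  proof (rule ccontr)
    assume "?U \<inter> ?P \<noteq> {}"
    then obtain x y where x: "x \<in> ball a r" and y: "y \<in> sphere a r" and "f x = f y"
      by blast
    then have "x = y"
      using inj_onD[OF inj] by auto
    then show False
      using x y by simp
  qed
  have component_in_U: "C \<subseteq> ?U" if "connected C" "C \<inter> ?P = {}" "C \<inter> ?U \<noteq> {}" for C
  proof -
    have "cball a r = ball a r \<union> sphere a r"
      by auto
    then have "C \<inter> ?U = C \<inter> f ` cball a r"
      using \<open>C \<inter> ?P = {}\<close> by (simp add: image_Un Int_Un_distrib)
    moreover have "closed (f ` cball a r)"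
      using cont by (intro compact_imp_closed compact_continuous_image) auto
    ultimately have "closedin (top_of_set C) (C \<inter> ?U)"
      by (simp add: closedin_closed_Int)
    moreover have "openin (top_of_set C) (C \<inter> ?U)"
      using \<open>open ?U\<close> by (rule openin_open_Int)
    ultimately have "C \<inter> ?U = {} \<or> C \<inter> ?U = C"
      using \<open>connected C\<close> by (simp add: connected_clopen)
    then show ?thesis
      using \<open>C \<inter> ?U \<noteq> {}\<close> by blast
  qed
  have "inside ?P \<inter> ?P = {}" "outside ?P \<inter> ?P = {}"
    using jordan(4) by blast+
  have "outside ?P \<inter> ?U = {}"
  proof (rule ccontr)
    assume "outside ?P \<inter> ?U \<noteq> {}"
    then have "outside ?P \<subseteq> ?U"
      using component_in_U jordan(2) \<open>outside ?P \<inter> ?P = {}\<close> by blast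
    then show False
      using jordan(3) \<open>bounded ?U\<close> bounded_subset by blast
  qed
  then have "?U \<subseteq> inside ?P"
    using U_disjoint_P jordan(4) by blast
  moreover have "inside ?P \<subseteq> ?U"
  proof (rule component_in_U)
    show "inside ?P \<inter> ?U \<noteq> {}"
      using \<open>?U \<subseteq> inside ?P\<close> centre_in_ball[of a r] \<open>r > 0\<close> by blast
  qed (use jordan(1) \<open>inside ?P \<inter> ?P = {}\<close> in auto)
  ultimately show ?thesis by blast
qed

definition complex_of_vec :: "real^2 \<Rightarrow> complex" where
  "complex_of_vec v = Complex (v$1) (v$2)"

definition vec_of_complex :: "complex \<Rightarrow> real^2" where
  "vec_of_complex z = vector [Re z, Im z]"

lemma complex_of_vec_of_complex [simp]: "complex_of_vec (vec_of_complex z) = z"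
  by (simp add: complex_of_vec_def vec_of_complex_def)

lemma vec_of_complex_of_vec [simp]: "vec_of_complex (complex_of_vec v) = v"
  by (simp add: complex_of_vec_def vec_of_complex_def vec_eq_iff forall_2)

lemma norm_complex_of_vec [simp]: "norm (complex_of_vec v) = norm v"
  by (simp add: complex_of_vec_def norm_vec_def L2_set_def UNIV_2 complex_norm)

lemma borel_measurable_complex_of_vec: "complex_of_vec \<in> borel_measurable borel"
  unfolding complex_of_vec_def
  by (intro borel_measurable_continuous_onI continuous_intros continuous_on_component)

lemma distr_lborel_complex_of_vec: "distr lborel borel complex_of_vec = lborel"
proof (rule lborel_eqI[symmetric])
  fix l u :: complex
  assume le: "\<And>b. b \<in> Basis \<Longrightarrow> l \<bullet> b \<le> u \<bullet> b"
  have "Re l \<le> Re u" "Im l \<le> Im u"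
    using le[of 1] le[of \<i>] by (auto simp: Basis_complex_def)
  have "complex_of_vec -` box l u = box (vec_of_complex l) (vec_of_complex u)"
    by (auto simp: mem_box_cart mem_box Basis_complex_def complex_of_vec_def vec_of_complex_def forall_2)
  then have "emeasure (distr lborel borel complex_of_vec) (box l u)
      = emeasure lborel (box (vec_of_complex l) (vec_of_complex u))"
    using borel_measurable_complex_of_vec by (simp add: emeasure_distr measurable_lborel1)
  also have "\<dots> = measure lborel (cbox (vec_of_complex l) (vec_of_complex u))"
    by (simp add: emeasure_lborel_box_eq emeasure_lborel_cbox_eq measure_lborel_cbox_eq)
  also have "\<dots> = (Re u - Re l) * (Im u - Im l)"
  proof (subst content_cbox_cart)
    have "vec_of_complex l \<in> cbox (vec_of_complex l) (vec_of_complex u)"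
      using \<open>Re l \<le> Re u\<close> \<open>Im l \<le> Im u\<close> by (simp add: vec_of_complex_def mem_box_cart forall_2)
    then show "cbox (vec_of_complex l) (vec_of_complex u) \<noteq> {}" by blast
  qed (simp add: vec_of_complex_def UNIV_2)
  also have "\<dots> = (\<Prod>b\<in>Basis. (u - l) \<bullet> b)"
    by (simp add: Basis_complex_def)
  finally show "emeasure (distr lborel borel complex_of_vec) (box l u) = (\<Prod>b\<in>Basis. (u - l) \<bullet> b)" .
qed simp

lemma measure_vimage_complex_of_vec:
  assumes "S \<in> sets borel"
  shows "measure lebesgue (complex_of_vec -` S) = measure lebesgue S"
proof -
  have "complex_of_vec -` S \<in> sets borel"
    using measurable_sets[OF borel_measurable_complex_of_vec assms] by simp
  then have "measure lebesgue (complex_of_vec -` S) = measure (distr lborel borel complex_of_vec) S"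
    using assms borel_measurable_complex_of_vec by (simp add: measure_distr measurable_lborel1)
  also have "\<dots> = measure lebesgue S"
    using assms by (simp add: distr_lborel_complex_of_vec)
  finally show ?thesis .
qed

lemma has_derivative_vec_nth [derivative_intros]: "((\<lambda>v. v $ i) has_derivative (\<lambda>h. h $ i)) F"
  by (rule bounded_linear_imp_has_derivative) (rule bounded_linear_vec_nth)

lemma has_derivative_vector_2:
  fixes f g :: "'a::real_normed_vector \<Rightarrow> real"
  assumes "(f has_derivative f') F" "(g has_derivative g') F"
  shows "((\<lambda>x. vector [f x, g x] :: real^2) has_derivative (\<lambda>h. vector [f' h, g' h])) F"
proof -
  have vector_eq: "vector [p, q] = p *\<^sub>R axis 1 1 + q *\<^sub>R (axis 2 1 :: real^2)" for p q :: real
    by (simp add: vec_eq_iff forall_2 axis_def)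
  show ?thesis
    unfolding vector_eq by (intro has_derivative_add has_derivative_scaleR_left assms)
qed

(* v |-> |v| v maps the unit disc bijectively onto itself with Jacobian 2 |v|^2; this yields the
   integral of |v|^2 over the disc without polar coordinates. *)
definition radial_square :: "real^2 \<Rightarrow> real^2" where
  "radial_square v = norm v *\<^sub>R v"

lemma has_derivative_radial_square:
  "(radial_square has_derivative (\<lambda>h. norm v *\<^sub>R h + (h \<bullet> sgn v) *\<^sub>R v)) (at v within S)"
proof (cases "v = 0")
  case False
  then show ?thesis
    unfolding radial_square_def
    by (auto intro!: derivative_eq_intros has_derivative_at_withinI[OF has_derivative_norm])
next
  case True
  have "(\<lambda>y. norm (radial_square y - radial_square 0 - 0) / norm (y - 0)) = norm"
    by (auto simp: fun_eq_iff radial_square_def)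
  moreover have "(norm \<longlongrightarrow> 0) (at 0 within S)"
    using tendsto_norm[OF tendsto_ident_at, of 0 S] by simp
  ultimately have "((\<lambda>y. norm (radial_square y - radial_square 0 - 0) / norm (y - 0)) \<longlongrightarrow> 0) (at 0 within S)"
    by simp
  then show ?thesis
    using True by (simp add: has_derivative_iff_norm)
qed

lemma det_radial_square_derivative:
  "det (matrix (\<lambda>h. norm v *\<^sub>R h + (h \<bullet> sgn v) *\<^sub>R (v::real^2))) = 2 * norm v ^ 2"
proof (cases "v = 0")
  case True
  then show ?thesis by (simp add: det_2 matrix_def)
next
  case False
  have "axis 1 (1::real) $ (2::2) = 0" "axis 2 (1::real) $ (1::2) = 0"
    by (simp_all add: axis_def)
  with False have "det (matrix (\<lambda>h. norm v *\<^sub>R h + (h \<bullet> sgn v) *\<^sub>R v))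
      = norm v ^ 2 + ((v$1)^2 + (v$2)^2)"
    by (simp add: det_2 matrix_def inner_axis' sgn_div_norm field_simps power2_eq_square)
  also have "\<dots> = 2 * norm v ^ 2"
    by (simp add: norm_vec_def L2_set_def UNIV_2)
  finally show ?thesis .
qed

lemma inj_radial_square: "inj radial_square"
proof (rule injI)
  fix v w
  assume eq: "radial_square v = radial_square w"
  then have "norm v ^ 2 = norm w ^ 2"
    by (metis norm_scaleR abs_norm_cancel power2_eq_square radial_square_def)
  then have "norm v = norm w"
    by (simp add: power2_eq_iff_nonneg)
  then show "v = w"
    using eq by (cases "v = 0") (auto simp: radial_square_def)
qed

lemma radial_square_ball: "radial_square ` ball 0 1 = ball 0 1"
proof
  show "radial_square ` ball 0 1 \<subseteq> ball 0 1"
    by (auto simp: radial_square_def abs_square_less_1 power2_eq_square[symmetric])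
  show "ball 0 1 \<subseteq> radial_square ` ball 0 1"
  proof
    fix w :: "real^2"
    assume "w \<in> ball 0 1"
    define v where "v = (1 / sqrt (norm w)) *\<^sub>R w"
    have "radial_square v = w" "v \<in> ball 0 1"
      using \<open>w \<in> ball 0 1\<close> by (auto simp: v_def radial_square_def real_div_sqrt)
    then show "w \<in> radial_square ` ball 0 1" by blast
  qed
qed

lemma has_integral_norm_square_ball: "((\<lambda>v::real^2. norm v ^ 2) has_integral pi / 2) (ball 0 1)"
proof -
  have "measure lebesgue (ball (0::real^2) 1) = pi"
    using circle_area[of 1 0] by simp
  then have "((\<lambda>v. \<bar>det (matrix (\<lambda>h. norm v *\<^sub>R h + (h \<bullet> sgn v) *\<^sub>R v))\<bar>) has_integral pi)
      (ball (0::real^2) 1)"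
    using has_measure_differentiable_image[of "ball 0 1" radial_square
        "\<lambda>v h. norm v *\<^sub>R h + (h \<bullet> sgn v) *\<^sub>R v" pi]
      has_derivative_radial_square inj_on_subset[OF inj_radial_square]
    by (simp add: radial_square_ball)
  then have "((\<lambda>v::real^2. 2 * norm v ^ 2) has_integral pi) (ball 0 1)"
    by (simp add: det_radial_square_derivative)
  from has_integral_mult_right[OF this, of "1/2"] show ?thesis
    by simp
qed

lemma has_integral_one_minus_norm_square_ball:
  "((\<lambda>v::real^2. 1 - norm v ^ 2) has_integral pi / 2) (ball 0 1)"
proof -
  have "((\<lambda>v::real^2. 1) has_integral measure lborel (ball (0::real^2) 1)) (ball 0 1)"
    by (rule has_integral_measure_lborel) (simp, rule emeasure_lborel_ball_finite)
  then have "((\<lambda>v::real^2. 1) has_integral pi) (ball 0 1)"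
    using circle_area[of 1 "0::real^2"] by simp
  from has_integral_diff[OF this has_integral_norm_square_ball] show ?thesis
    by simp
qed

definition scale_axes :: "real \<Rightarrow> real \<Rightarrow> complex \<Rightarrow> complex" where
  "scale_axes a b w = Complex (Re w / a) (Im w / b)"

definition pedal_map :: "real \<Rightarrow> real \<Rightarrow> real \<Rightarrow> real \<Rightarrow> complex \<Rightarrow> complex" where
  "pedal_map a b c u z =
     scale_axes a b (of_real (c^2) * (z + cis u * cnj z ^ 2 / 2) + of_real (c^2 / 2 - a^2) * cis u)"

lemma neg_pedal_eq_pedal_map: "neg_pedal a b c u t = pedal_map a b c u (cis (- t))"
proof -
  define w where "w = of_real (c^2) * (cis (- t) + cis u * cnj (cis (- t)) ^ 2 / 2)
                       + of_real (c^2 / 2 - a^2) * cis u"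
  have pythagoras: "sin t ^ 2 + cos t ^ 2 = 1" by simp
  have "Re w = c^2 * (1 + cos (t + u)) * cos t - a^2 * cos u"
    using pythagoras unfolding w_def by (simp add: cis.code cos_add power2_eq_square) algebra
  moreover have "Im w = c^2 * cos t * sin (t + u) - c^2 * sin t - a^2 * sin u"
    using pythagoras unfolding w_def by (simp add: cis.code sin_add power2_eq_square) algebra
  moreover have "pedal_map a b c u (cis (- t)) = scale_axes a b w"
    unfolding pedal_map_def w_def ..
  ultimately show ?thesis
    unfolding neg_pedal_def scale_axes_def by simp
qed

lemma neg_pedal_path_eq: "neg_pedal_path a b c u = pedal_map a b c u \<circ> reversepath (circlepath 0 1)"
proof -
  have "reversepath (circlepath 0 1) s = cis (- (2 * pi * s))" for s
    by (simp add: reversepath_def circlepath cis_conv_exp exp_diff exp_minus divide_inverse algebra_simps)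
  then show ?thesis
    by (simp add: fun_eq_iff neg_pedal_path_def neg_pedal_eq_pedal_map)
qed

lemma inj_scale_axes: "a \<noteq> 0 \<Longrightarrow> b \<noteq> 0 \<Longrightarrow> inj (scale_axes a b)"
  by (auto intro!: injI simp: scale_axes_def complex_eq_iff)

lemma inj_on_pedal_map:
  assumes "a \<noteq> 0" "b \<noteq> 0" "c \<noteq> 0"
  shows "inj_on (pedal_map a b c u) (cball 0 1)"
proof -
  let ?q = "\<lambda>z. z + cis u * cnj z ^ 2 / 2"
  let ?h = "scale_axes a b \<circ> (\<lambda>w. of_real (c^2) * w + of_real (c^2 / 2 - a^2) * cis u)"
  have "pedal_map a b c u = ?h \<circ> ?q"
    by (simp add: pedal_map_def fun_eq_iff)
  moreover have "inj ?h"
  proof (rule inj_compose)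
    show "inj (scale_axes a b)" using assms(1,2) by (rule inj_scale_axes)
    show "inj (\<lambda>w. of_real (c^2) * w + of_real (c^2 / 2 - a^2) * cis u)"
      by (rule injI) (use assms in simp)
  qed
  moreover have "inj_on ?q (cball 0 1)"
    by (rule inj_on_add_cnj_square_cball) simp
  ultimately show ?thesis
    by (simp add: comp_inj_on inj_on_subset)
qed

lemma continuous_on_pedal_map: "continuous_on S (pedal_map a b c u)"
  unfolding pedal_map_def scale_axes_def divide_inverse by (intro continuous_intros)

lemma open_pedal_map_ball:
  assumes "a \<noteq> 0" "b \<noteq> 0" "c \<noteq> 0"
  shows "open (pedal_map a b c u ` ball 0 1)"
  using continuous_on_pedal_map inj_on_subset[OF inj_on_pedal_map[OF assms] ball_subset_cball]
  by (intro invariance_of_domain) auto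

lemma simple_path_neg_pedal_path:
  assumes "a \<noteq> 0" "b \<noteq> 0" "c \<noteq> 0"
  shows "simple_path (neg_pedal_path a b c u)"
  unfolding neg_pedal_path_eq
  using continuous_on_pedal_map inj_on_subset[OF inj_on_pedal_map[OF assms] sphere_cball]
  by (intro simple_path_continuous_image simple_path_reversepath)
     (auto simp: simple_path_circlepath path_image_reversepath)

lemma pathfinish_neg_pedal_path: "pathfinish (neg_pedal_path a b c u) = pathstart (neg_pedal_path a b c u)"
  by (simp add: neg_pedal_path_eq pathstart_compose pathfinish_compose)

lemma path_image_neg_pedal_path: "path_image (neg_pedal_path a b c u) = pedal_map a b c u ` sphere 0 1"
  by (simp add: neg_pedal_path_eq path_image_compose path_image_reversepath)

definition pedal_map_vec :: "real \<Rightarrow> real \<Rightarrow> real \<Rightarrow> real \<Rightarrow> real^2 \<Rightarrow> real^2" where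
  "pedal_map_vec a b c u v = vec_of_complex (pedal_map a b c u (complex_of_vec v))"

definition pedal_jacobian :: "real \<Rightarrow> real \<Rightarrow> real \<Rightarrow> real \<Rightarrow> real^2 \<Rightarrow> real^2^2" where
  "pedal_jacobian a b c u v =
     vector [vector [c^2 * (1 + cos u * v$1 + sin u * v$2) / a, c^2 * (sin u * v$1 - cos u * v$2) / a],
             vector [c^2 * (sin u * v$1 - cos u * v$2) / b, c^2 * (1 - cos u * v$1 - sin u * v$2) / b]]"

lemma pedal_map_vec_eq:
  "pedal_map_vec a b c u v = vector
     [(c^2 * v$1 + c^2 / 2 * (cos u * ((v$1)^2 - (v$2)^2) + 2 * sin u * v$1 * v$2)
         + (c^2 / 2 - a^2) * cos u) / a,
      (c^2 * v$2 + c^2 / 2 * (sin u * ((v$1)^2 - (v$2)^2) - 2 * cos u * v$1 * v$2)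
         + (c^2 / 2 - a^2) * sin u) / b]"
  by (simp add: pedal_map_vec_def pedal_map_def scale_axes_def vec_of_complex_def complex_of_vec_def
      cis.code vec_eq_iff forall_2 power2_eq_square divide_simps algebra_simps)

lemma has_derivative_pedal_map_vec:
  assumes "a \<noteq> 0" "b \<noteq> 0"
  shows "(pedal_map_vec a b c u has_derivative (\<lambda>h. pedal_jacobian a b c u v *v h)) (at v within S)"
proof -
  have "(\<lambda>h. pedal_jacobian a b c u v *v h) = (\<lambda>h. vector
     [(c^2 + c^2 * (cos u * v$1 + sin u * v$2)) / a * h$1 + c^2 * (sin u * v$1 - cos u * v$2) / a * h$2,
      c^2 * (sin u * v$1 - cos u * v$2) / b * h$1 + (c^2 - c^2 * (cos u * v$1 + sin u * v$2)) / b * h$2])"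
    by (simp add: fun_eq_iff vec_eq_iff forall_2 pedal_jacobian_def matrix_vector_mult_def UNIV_2
        algebra_simps)
  moreover have "(pedal_map_vec a b c u has_derivative (\<lambda>h. vector
     [(c^2 + c^2 * (cos u * v$1 + sin u * v$2)) / a * h$1 + c^2 * (sin u * v$1 - cos u * v$2) / a * h$2,
      c^2 * (sin u * v$1 - cos u * v$2) / b * h$1 + (c^2 - c^2 * (cos u * v$1 + sin u * v$2)) / b * h$2]))
     (at v within S)"
    unfolding pedal_map_vec_eq[abs_def] using assms
    by (intro has_derivative_vector_2)
       (auto intro!: derivative_eq_intros simp: field_simps power2_eq_square)
  ultimately show ?thesis by simp
qed

lemma det_pedal_jacobian:
  assumes "a \<noteq> 0" "b \<noteq> 0"
  shows "det (pedal_jacobian a b c u v) = c^4 * (1 - norm v ^ 2) / (a * b)"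
  using assms
  by (simp add: det_2 pedal_jacobian_def norm_vec_def L2_set_def UNIV_2 divide_simps)
     (insert sin_cos_squared_add[of u], algebra)

lemma measure_pedal_map_ball:
  assumes "a > 0" "b > 0" "c \<noteq> 0"
  shows "measure lebesgue (pedal_map a b c u ` ball 0 1) = pi * c^4 / (2 * a * b)"
proof -
  let ?F = "pedal_map_vec a b c u" and ?k = "c^4 / (a * b)"
  have vimage: "complex_of_vec -` (pedal_map a b c u ` ball 0 1) = ?F ` ball 0 1"
  proof
    show "?F ` ball 0 1 \<subseteq> complex_of_vec -` (pedal_map a b c u ` ball 0 1)"
      by (auto simp: pedal_map_vec_def)
    show "complex_of_vec -` (pedal_map a b c u ` ball 0 1) \<subseteq> ?F ` ball 0 1"
    proof
      fix v
      assume "v \<in> complex_of_vec -` (pedal_map a b c u ` ball 0 1)"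
      then obtain z where "z \<in> ball 0 1" "complex_of_vec v = pedal_map a b c u z"
        by auto
      then have "vec_of_complex z \<in> ball 0 1" "?F (vec_of_complex z) = v"
        unfolding pedal_map_vec_def
        by (metis complex_of_vec_of_complex mem_ball_0 norm_complex_of_vec,
            metis complex_of_vec_of_complex vec_of_complex_of_vec)
      then show "v \<in> ?F ` ball 0 1" by blast
    qed
  qed
  have "inj_on ?F (ball 0 1)"
  proof (rule inj_onI)
    fix v w :: "real^2"
    assume "v \<in> ball 0 1" "w \<in> ball 0 1" "?F v = ?F w"
    then have "complex_of_vec v = complex_of_vec w"
      using inj_on_pedal_map[of a b c u] assms
      by (auto simp: pedal_map_vec_def inj_on_def dest: arg_cong[where f = complex_of_vec])
    then show "v = w"
      by (metis vec_of_complex_of_vec)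
  qed
  moreover have "((\<lambda>v. \<bar>det (matrix (\<lambda>h. pedal_jacobian a b c u v *v h))\<bar>) has_integral
      pi * c^4 / (2 * a * b)) (ball 0 1)"
  proof (rule has_integral_eq)
    show "((\<lambda>v::real^2. ?k * (1 - norm v ^ 2)) has_integral pi * c^4 / (2 * a * b)) (ball 0 1)"
      using has_integral_mult_right[OF has_integral_one_minus_norm_square_ball, of ?k]
      by (simp add: field_simps)
    show "?k * (1 - norm v ^ 2) = \<bar>det (matrix (\<lambda>h. pedal_jacobian a b c u v *v h))\<bar>"
      if "v \<in> ball 0 1" for v
    proof -
      have "norm v ^ 2 \<le> 1"
        using that by (simp add: power_le_one)
      then show ?thesis
        using assms by (simp add: det_pedal_jacobian)
    qed
  qed
  ultimately have "measure lebesgue (?F ` ball 0 1) = pi * c^4 / (2 * a * b)"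
    using has_measure_differentiable_image[of "ball 0 1" ?F "\<lambda>v h. pedal_jacobian a b c u v *v h"]
      has_derivative_pedal_map_vec assms by auto
  moreover have "pedal_map a b c u ` ball 0 1 \<in> sets borel"
    using open_pedal_map_ball assms by simp
  ultimately show ?thesis
    using measure_vimage_complex_of_vec vimage by metis
qed

theorem corollary3p1:
  fixes a b c u :: real
  assumes "a > b" "b > 0" "c > 0" "c^2 = a^2 - b^2"
  shows "simple_path (neg_pedal_path a b c u)
       \<and> pathfinish (neg_pedal_path a b c u) = pathstart (neg_pedal_path a b c u)
       \<and> inside (path_image (neg_pedal_path a b c u)) \<in> sets lebesgue
       \<and> measure lebesgue (inside (path_image (neg_pedal_path a b c u)))
           = pi * c^4 / (2 * a * b)"
proof -
  have "a > 0" "a \<noteq> 0" "b \<noteq> 0" "c \<noteq> 0"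
    using assms(1-3) by auto
  have inside: "inside (path_image (neg_pedal_path a b c u)) = pedal_map a b c u ` ball 0 1"
    unfolding path_image_neg_pedal_path
    using \<open>a \<noteq> 0\<close> \<open>b \<noteq> 0\<close> \<open>c \<noteq> 0\<close>
    by (intro inside_image_sphere continuous_on_pedal_map inj_on_pedal_map) auto
  show ?thesis
    unfolding inside
  proof (intro conjI)
    show "simple_path (neg_pedal_path a b c u)"
      using \<open>a \<noteq> 0\<close> \<open>b \<noteq> 0\<close> \<open>c \<noteq> 0\<close> by (rule simple_path_neg_pedal_path)
    show "pedal_map a b c u ` ball 0 1 \<in> sets lebesgue"
      using \<open>a \<noteq> 0\<close> \<open>b \<noteq> 0\<close> \<open>c \<noteq> 0\<close> open_pedal_map_ball by simp
    show "measure lebesgue (pedal_map a b c u ` ball 0 1) = pi * c^4 / (2 * a * b)"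
      using \<open>a > 0\<close> \<open>b > 0\<close> \<open>c \<noteq> 0\<close> by (rule measure_pedal_map_ball)
  qed (rule pathfinish_neg_pedal_path)
qed

end
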